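(* Let $\phi=\tilde p/p$ be an irreducible rational inner function on $\mathbb{D}^3$ of degree $(m,n,1)$ with $p(z)=p_1(z_1,z_2)+z_3p_2(z_1,z_2)$, $\tilde p(z)=z_3\tilde p_1(z_1,z_2)+\tilde p_2(z_1,z_2)$, and for $\lambda\in\mathbb{T}$ let $q_\lambda=\lambda p_1-\tilde p_2$. Let $(\tau_1,\tau_2)\in\mathbb{T}^2$. Then: (A) if $(\tau_1,\tau_2,\tau_3)\in\mathcal{Z}_p$ for exactly one $\tau_3\in\mathbb{T}$, then for $\lambda\in\mathbb{T}$, $\phi^*(\tau)=\lambda$ if and only if $q_\lambda(\tau_1,\tau_2)=0$ (here $\tau=(\tau_1,\tau_2,\tau_3')$ with any $\tau_3'\in\mathbb{T}$); (B) if $\{(\tau_1,\tau_2)\}\times\mathbb{T}\subseteq\mathcal{Z}_p$, then $q_\lambda(\tau_1,\tau_2)=0$ for every $\lambda\in\mathbb{T}$.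
   Context: A rational inner function (RIF) on $\mathbb{D}^3$ is a rational function holomorphic on the tridisk with unimodular radial limits a.e. on $\mathbb{T}^3$; it is written $\phi=\tilde p/p$ with $p$ zero-free on $\mathbb{D}^3$, $p,\tilde p$ without common factors. For degree $(m,n,1)$, $\tilde p(z)=z_1^mz_2^nz_3\overline{p(1/\bar z_1,1/\bar z_2,1/\bar z_3)}$ and $\tilde p_j(z_1,z_2)=z_1^mz_2^n\overline{p_j(1/\bar z_1,1/\bar z_2)}$. $\phi^*(\tau)$ denotes the nontangential limit of $\phi$ at $\tau\in\mathbb{T}^3$ (limit as $z\to\tau$ in $\mathbb{D}^3$ with $\|z-\tau\|\le C(1-\|z\|)$), which exists for every RIF at every point of $\mathbb{T}^3$; under the hypothesis of (A) it does not depend on the third coordinate of $\tau$. $\mathcal{Z}_p$ is the zero set of $p$. *)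

theory Defs
  imports "HOL-Analysis.Analysis"
begin

type_synonym coeffs3 = "nat \<Rightarrow> nat \<Rightarrow> nat \<Rightarrow> complex"
type_synonym pt3 = "complex \<times> complex \<times> complex"

definition peval3 :: "nat \<Rightarrow> nat \<Rightarrow> nat \<Rightarrow> coeffs3 \<Rightarrow> pt3 \<Rightarrow> complex" where
  "peval3 m n k c z = (case z of (z1, z2, z3) \<Rightarrow>
     (\<Sum>i\<le>m. \<Sum>j\<le>n. \<Sum>l\<le>k. c i j l * z1 ^ i * z2 ^ j * z3 ^ l))"

definition peval2 :: "nat \<Rightarrow> nat \<Rightarrow> (nat \<Rightarrow> nat \<Rightarrow> complex) \<Rightarrow> complex \<Rightarrow> complex \<Rightarrow> complex" where
  "peval2 m n c z1 z2 = (\<Sum>i\<le>m. \<Sum>j\<le>n. c i j * z1 ^ i * z2 ^ j)"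

text \<open>Polynomial functions on C^3 (equality of polynomial functions = equality of polynomials).\<close>
definition is_poly3 :: "(pt3 \<Rightarrow> complex) \<Rightarrow> bool" where
  "is_poly3 f \<longleftrightarrow> (\<exists>N c. f = peval3 N N N c)"

definition poly3_const :: "(pt3 \<Rightarrow> complex) \<Rightarrow> bool" where
  "poly3_const f \<longleftrightarrow> (\<exists>a. \<forall>z. f z = a)"

definition poly3_irreducible :: "(pt3 \<Rightarrow> complex) \<Rightarrow> bool" where
  "poly3_irreducible p \<longleftrightarrow> is_poly3 p \<and> \<not> poly3_const p \<and>
     (\<forall>f g. is_poly3 f \<and> is_poly3 g \<and> p = (\<lambda>z. f z * g z) \<longrightarrow> poly3_const f \<or> poly3_const g)"

definition poly3_no_common_factor :: "(pt3 \<Rightarrow> complex) \<Rightarrow> (pt3 \<Rightarrow> complex) \<Rightarrow> bool" where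
  "poly3_no_common_factor p q \<longleftrightarrow>
     \<not> (\<exists>h f g. is_poly3 h \<and> \<not> poly3_const h \<and> is_poly3 f \<and> is_poly3 g \<and>
            p = (\<lambda>z. h z * f z) \<and> q = (\<lambda>z. h z * g z))"

definition exact_degree3 :: "nat \<Rightarrow> nat \<Rightarrow> nat \<Rightarrow> coeffs3 \<Rightarrow> bool" where
  "exact_degree3 m n k c \<longleftrightarrow>
     (\<exists>j\<le>n. \<exists>l\<le>k. c m j l \<noteq> 0) \<and> (\<exists>i\<le>m. \<exists>l\<le>k. c i n l \<noteq> 0) \<and>
     (\<exists>i\<le>m. \<exists>j\<le>n. c i j k \<noteq> 0)"

text \<open>Reflection: coefficients of z^(m,n,k) * conj(p(1/conj z)).\<close>
definition refl3 :: "nat \<Rightarrow> nat \<Rightarrow> nat \<Rightarrow> coeffs3 \<Rightarrow> coeffs3" where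
  "refl3 m n k c = (\<lambda>i j l. cnj (c (m - i) (n - j) (k - l)))"

definition tridisk :: "pt3 set" where
  "tridisk = {(z1, z2, z3). cmod z1 < 1 \<and> cmod z2 < 1 \<and> cmod z3 < 1}"

definition maxnorm3 :: "pt3 \<Rightarrow> real" where
  "maxnorm3 z = (case z of (a, b, c) \<Rightarrow> max (cmod a) (max (cmod b) (cmod c)))"

definition nt_region :: "pt3 \<Rightarrow> real \<Rightarrow> pt3 set" where
  "nt_region \<tau> C = {z \<in> tridisk. maxnorm3 (z - \<tau>) \<le> C * (1 - maxnorm3 z)}"

definition has_nt_limit :: "(pt3 \<Rightarrow> complex) \<Rightarrow> pt3 \<Rightarrow> complex \<Rightarrow> bool" where
  "has_nt_limit f \<tau> L \<longleftrightarrow> (\<forall>C>0. (f \<longlongrightarrow> L) (at \<tau> within nt_region \<tau> C))"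

end

theory Submission
  imports Defs
begin

text \<open>
  Write \<open>p = p\<^sub>1 + z\<^sub>3 p\<^sub>2\<close> and \<open>p\<^sup>~ = z\<^sub>3 p\<^sup>~\<^sub>1 + p\<^sup>~\<^sub>2\<close>; on \<open>\<bbbT>\<^sup>2\<close> the reflections
  satisfy \<open>p\<^sup>~\<^sub>j = z\<^sub>1\<^sup>m z\<^sub>2\<^sup>n conj p\<^sub>j\<close>, and zero-freeness of \<open>p\<close> on \<open>\<bbbD>\<^sup>3\<close> forces
  \<open>|p\<^sub>2| \<le> |p\<^sub>1|\<close> there. If \<open>p(\<tau>\<^sub>1, \<tau>\<^sub>2, \<cdot>)\<close> vanishes on all of \<open>\<bbbT>\<close>, then
  \<open>p\<^sub>1(\<tau>) = p\<^sub>2(\<tau>) = 0\<close>, hence \<open>p\<^sup>~\<^sub>2(\<tau>) = 0\<close>, which is (B).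

  If it vanishes at exactly one point, then \<open>|p\<^sub>1(\<tau>)| = |p\<^sub>2(\<tau>)| \<noteq> 0\<close>. The cross term
  \<open>D = p\<^sup>~\<^sub>1 p\<^sub>1 - p\<^sup>~\<^sub>2 p\<^sub>2\<close> equals \<open>z\<^sub>1\<^sup>m z\<^sub>2\<^sup>n (|p\<^sub>1|\<^sup>2 - |p\<^sub>2|\<^sup>2)\<close> on \<open>\<bbbT>\<^sup>2\<close>, a unimodular
  multiple of a nonnegative function vanishing at \<open>\<tau>\<close>, so both first derivatives of \<open>D\<close>
  vanish at \<open>\<tau>\<close>. With \<open>K = p\<^sup>~\<^sub>2(\<tau>) / p\<^sub>1(\<tau>)\<close> one has
  \<open>\<phi> - K = (p\<^sup>~\<^sub>1 - K p\<^sub>2) / p\<^sub>2 - D / (p\<^sub>2 p)\<close> and \<open>|p| \<ge> |p\<^sub>2| (1 - |z\<^sub>3|)\<close>. In a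
  nontangential region \<open>|z\<^sub>j - \<tau>\<^sub>j| \<le> C (1 - |z\<^sub>3|)\<close>, so the vanishing derivatives make the
  second term \<open>o(1)\<close>; hence \<open>\<phi>\<^sup>*(\<tau>) = K\<close>, which is (A).
\<close>

section \<open>Polynomials of degree one in the last variable\<close>

lemma sum_atMost_rev: "(\<Sum>i\<le>m. g (m - i)) = (\<Sum>i\<le>(m::nat). g i)"
  using sum.atLeastAtMost_rev[of g 0 m] by (simp add: atLeast0AtMost)

lemma power_diff_unimodular:
  fixes x :: complex
  assumes "cmod x = 1" and "i \<le> m"
  shows "x ^ (m - i) = x ^ m * cnj x ^ i"
proof -
  have "x \<noteq> 0" using assms(1) by auto
  then have "x ^ (m - i) = x ^ m / x ^ i" using assms(2) by (simp add: power_diff)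
  also have "\<dots> = x ^ m * cnj x ^ i" using assms(1) by (simp add: divide_conv_cnj norm_power)
  finally show ?thesis .
qed

lemma peval2_reflect_on_torus:
  fixes x y :: complex
  assumes "cmod x = 1" and "cmod y = 1"
  shows "peval2 m n (\<lambda>i j. cnj (d (m - i) (n - j))) x y = x ^ m * y ^ n * cnj (peval2 m n d x y)"
proof -
  have "peval2 m n (\<lambda>i j. cnj (d (m - i) (n - j))) x y
      = (\<Sum>i\<le>m. \<Sum>j\<le>n. cnj (d i j) * x ^ (m - i) * y ^ (n - j))"
    unfolding peval2_def
    by (subst sum_atMost_rev[symmetric], subst (2) sum_atMost_rev[symmetric]) simp
  also have "\<dots> = (\<Sum>i\<le>m. \<Sum>j\<le>n. x ^ m * y ^ n * (cnj (d i j) * cnj x ^ i * cnj y ^ j))"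
    using assms by (intro sum.cong refl) (simp add: power_diff_unimodular mult_ac)
  also have "\<dots> = x ^ m * y ^ n * cnj (peval2 m n d x y)"
    by (simp add: peval2_def sum_distrib_left)
  finally show ?thesis .
qed

lemma peval3_degree_one:
  "peval3 m n 1 c (z1, z2, z3) =
     peval2 m n (\<lambda>i j. c i j 0) z1 z2 + z3 * peval2 m n (\<lambda>i j. c i j 1) z1 z2"
  unfolding peval3_def peval2_def
  by (simp add: atMost_Suc sum.distrib sum_distrib_left mult_ac)

lemma peval3_refl3_degree_one:
  "peval3 m n 1 (refl3 m n 1 c) (z1, z2, z3) =
     z3 * peval2 m n (\<lambda>i j. cnj (c (m - i) (n - j) 0)) z1 z2
       + peval2 m n (\<lambda>i j. cnj (c (m - i) (n - j) 1)) z1 z2"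
  unfolding peval3_def peval2_def refl3_def
  by (simp add: atMost_Suc sum.distrib sum_distrib_left mult_ac add.commute)

section \<open>Caratheodory differentiability in two variables\<close>

text \<open>\<open>F a b\<close> and \<open>G a b\<close> are the two partial derivatives of \<open>f\<close> at \<open>(a, b)\<close>.\<close>
definition caratheodory_diff2 :: "complex \<Rightarrow> complex \<Rightarrow> (complex \<Rightarrow> complex \<Rightarrow> complex) \<Rightarrow> bool" where
  "caratheodory_diff2 a b f \<longleftrightarrow>
     (\<exists>F G. isCont (\<lambda>w. F (fst w) (snd w)) (a, b) \<and> isCont (\<lambda>w. G (fst w) (snd w)) (a, b) \<and>
        (\<forall>x y. f x y = f a b + (x - a) * F x y + (y - b) * G x y))"

lemma caratheodory_diff2_isCont:
  assumes "caratheodory_diff2 a b f"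
  shows "isCont (\<lambda>w. f (fst w) (snd w)) (a, b)"
proof -
  obtain F G where "isCont (\<lambda>w. F (fst w) (snd w)) (a, b)" "isCont (\<lambda>w. G (fst w) (snd w)) (a, b)"
    and eq: "\<And>x y. f x y = f a b + (x - a) * F x y + (y - b) * G x y"
    using assms unfolding caratheodory_diff2_def by blast
  then have "isCont (\<lambda>w. f a b + (fst w - a) * F (fst w) (snd w) + (snd w - b) * G (fst w) (snd w))
      (a, b)"
    by (intro continuous_intros)
  then show ?thesis by (subst eq)
qed

lemma caratheodory_diff2I:
  assumes "isCont (\<lambda>w. F (fst w) (snd w)) (a, b)" and "isCont (\<lambda>w. G (fst w) (snd w)) (a, b)"
    and "\<And>x y. f x y = f a b + (x - a) * F x y + (y - b) * G x y"
  shows "caratheodory_diff2 a b f"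
  using assms unfolding caratheodory_diff2_def by blast

lemma caratheodory_diff2_mult:
  assumes f: "caratheodory_diff2 a b f" and g: "caratheodory_diff2 a b g"
  shows "caratheodory_diff2 a b (\<lambda>x y. f x y * g x y)"
proof -
  obtain F G where F: "isCont (\<lambda>w. F (fst w) (snd w)) (a, b)"
    and G: "isCont (\<lambda>w. G (fst w) (snd w)) (a, b)"
    and f_eq: "\<And>x y. f x y = f a b + (x - a) * F x y + (y - b) * G x y"
    using f unfolding caratheodory_diff2_def by blast
  obtain F' G' where F': "isCont (\<lambda>w. F' (fst w) (snd w)) (a, b)"
    and G': "isCont (\<lambda>w. G' (fst w) (snd w)) (a, b)"
    and g_eq: "\<And>x y. g x y = g a b + (x - a) * F' x y + (y - b) * G' x y"
    using g unfolding caratheodory_diff2_def by blast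
  show ?thesis
  proof (rule caratheodory_diff2I[where F = "\<lambda>x y. F x y * g x y + f a b * F' x y"
                                    and G = "\<lambda>x y. G x y * g x y + f a b * G' x y"])
    fix x y
    have "f x y * g x y = f a b * g x y + ((x - a) * F x y + (y - b) * G x y) * g x y"
      by (subst f_eq) (simp add: algebra_simps)
    also have "f a b * g x y = f a b * (g a b + (x - a) * F' x y + (y - b) * G' x y)"
      by (subst g_eq) simp
    finally show "f x y * g x y = f a b * g a b + (x - a) * (F x y * g x y + f a b * F' x y)
        + (y - b) * (G x y * g x y + f a b * G' x y)"
      by (simp add: algebra_simps)
  qed (intro continuous_intros F F' G G' caratheodory_diff2_isCont[OF g])+
qed

lemma caratheodory_diff2_diff:
  assumes f: "caratheodory_diff2 a b f" and g: "caratheodory_diff2 a b g"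
  shows "caratheodory_diff2 a b (\<lambda>x y. f x y - g x y)"
proof -
  obtain F G where F: "isCont (\<lambda>w. F (fst w) (snd w)) (a, b)"
    and G: "isCont (\<lambda>w. G (fst w) (snd w)) (a, b)"
    and f_eq: "\<And>x y. f x y = f a b + (x - a) * F x y + (y - b) * G x y"
    using f unfolding caratheodory_diff2_def by blast
  obtain F' G' where F': "isCont (\<lambda>w. F' (fst w) (snd w)) (a, b)"
    and G': "isCont (\<lambda>w. G' (fst w) (snd w)) (a, b)"
    and g_eq: "\<And>x y. g x y = g a b + (x - a) * F' x y + (y - b) * G' x y"
    using g unfolding caratheodory_diff2_def by blast
  show ?thesis
  proof (rule caratheodory_diff2I[where F = "\<lambda>x y. F x y - F' x y" and G = "\<lambda>x y. G x y - G' x y"])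
    show "f x y - g x y = f a b - g a b + (x - a) * (F x y - F' x y) + (y - b) * (G x y - G' x y)"
      for x y
      by (subst f_eq, subst g_eq) (simp add: algebra_simps)
  qed (intro continuous_intros F F' G G')+
qed

lemma caratheodory_diff2_peval2: "caratheodory_diff2 a b (peval2 m n d)"
proof -
  define Sx where "Sx x i = (\<Sum>k<i. a ^ (i - Suc k) * x ^ k)" for x :: complex and i
  define Sy where "Sy y j = (\<Sum>k<j. b ^ (j - Suc k) * y ^ k)" for y :: complex and j
  have pow_x: "x ^ i = a ^ i + (x - a) * Sx x i" for x i
    unfolding Sx_def using power_diff_sumr2[of x i a] by (simp add: algebra_simps)
  have pow_y: "y ^ j = b ^ j + (y - b) * Sy y j" for y j
    unfolding Sy_def using power_diff_sumr2[of y j b] by (simp add: algebra_simps)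
  have monomial: "d i j * x ^ i * y ^ j = d i j * a ^ i * b ^ j
      + (x - a) * (d i j * Sx x i * y ^ j) + (y - b) * (d i j * a ^ i * Sy y j)"
    for x y i j
  proof -
    have "d i j * x ^ i * y ^ j = d i j * a ^ i * y ^ j + (x - a) * (d i j * Sx x i * y ^ j)"
      by (subst pow_x) (simp add: algebra_simps)
    also have "d i j * a ^ i * y ^ j = d i j * a ^ i * b ^ j + (y - b) * (d i j * a ^ i * Sy y j)"
      by (subst pow_y) (simp add: algebra_simps)
    finally show ?thesis by (simp add: algebra_simps)
  qed
  show ?thesis
  proof (rule caratheodory_diff2I[where F = "\<lambda>x y. \<Sum>i\<le>m. \<Sum>j\<le>n. d i j * Sx x i * y ^ j"
                                    and G = "\<lambda>x y. \<Sum>i\<le>m. \<Sum>j\<le>n. d i j * a ^ i * Sy y j"])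
    fix x y
    have "peval2 m n d x y = (\<Sum>i\<le>m. \<Sum>j\<le>n. d i j * a ^ i * b ^ j
        + (x - a) * (d i j * Sx x i * y ^ j) + (y - b) * (d i j * a ^ i * Sy y j))"
      unfolding peval2_def by (intro sum.cong refl) (rule monomial)
    then show "peval2 m n d x y = peval2 m n d a b + (x - a) * (\<Sum>i\<le>m. \<Sum>j\<le>n. d i j * Sx x i * y ^ j)
        + (y - b) * (\<Sum>i\<le>m. \<Sum>j\<le>n. d i j * a ^ i * Sy y j)"
      unfolding peval2_def by (simp only: sum.distrib sum_distrib_left)
  qed (auto simp: Sx_def Sy_def intro!: continuous_intros)
qed

section \<open>Boundary behaviour on the torus\<close>

lemma affine_unique_root_on_circle:
  fixes \<alpha> \<beta> :: complex
  assumes "\<exists>!t. cmod t = 1 \<and> \<alpha> + t * \<beta> = 0"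
  shows "\<beta> \<noteq> 0" and "cmod \<alpha> = cmod \<beta>"
proof -
  from assms obtain t where t: "cmod t = 1" "\<alpha> + t * \<beta> = 0"
    and unique: "\<And>s. cmod s = 1 \<Longrightarrow> \<alpha> + s * \<beta> = 0 \<Longrightarrow> s = t" by blast
  show "\<beta> \<noteq> 0"
  proof
    assume "\<beta> = 0"
    with t unique[of 1] unique[of "-1"] show False by simp
  qed
  from t show "cmod \<alpha> = cmod \<beta>" by (simp add: eq_neg_iff_add_eq_0[symmetric] norm_mult)
qed

lemma affine_vanishing_on_circle:
  fixes \<alpha> \<beta> :: complex
  assumes "\<forall>t. cmod t = 1 \<longrightarrow> \<alpha> + t * \<beta> = 0"
  shows "\<alpha> = 0" and "\<beta> = 0"
proof -
  from assms have "\<alpha> + \<beta> = 0" "\<alpha> - \<beta> = 0" by (auto dest: spec[of _ 1] spec[of _ "-1"])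
  then show "\<alpha> = 0" "\<beta> = 0" by (simp_all add: algebra_simps)
qed

definition circle_cayley :: "complex \<Rightarrow> real \<Rightarrow> complex" where
  "circle_cayley a t = a * (1 + \<i> * of_real t) / (1 - \<i> * of_real t)"

lemma circle_cayley_denominator_nonzero: "1 - \<i> * of_real t \<noteq> 0"
proof
  assume "1 - \<i> * of_real t = 0"
  then have "Re (1 - \<i> * of_real t) = 0" by simp
  then show False by simp
qed

lemma norm_circle_cayley: "cmod a = 1 \<Longrightarrow> cmod (circle_cayley a t) = 1"
proof -
  have "cmod (1 + \<i> * of_real t) = cmod (1 - \<i> * of_real t)" by (simp add: cmod_def)
  then show "cmod a = 1 \<Longrightarrow> cmod (circle_cayley a t) = 1"
    unfolding circle_cayley_def using circle_cayley_denominator_nonzero[of t]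
    by (simp add: norm_divide norm_mult)
qed

lemma circle_cayley_minus_base:
  "circle_cayley a t - a = a * (2 * \<i> * of_real t) / (1 - \<i> * of_real t)"
  unfolding circle_cayley_def using circle_cayley_denominator_nonzero[of t]
  by (simp add: field_simps)

lemma tendsto_circle_cayley: "(circle_cayley a \<longlongrightarrow> a) (at 0)"
proof -
  have "(circle_cayley a \<longlongrightarrow> a * (1 + \<i> * of_real 0) / (1 - \<i> * of_real 0)) (at 0)"
    unfolding circle_cayley_def[abs_def] by (intro tendsto_intros) auto
  then show ?thesis by simp
qed

lemma limit_nonneg_div_eq_0:
  fixes Q :: "real \<Rightarrow> complex" and g :: "real \<Rightarrow> real"
  assumes lim: "(Q \<longlongrightarrow> L) (at 0)"
    and Q: "\<And>t. t \<noteq> 0 \<Longrightarrow> Q t = of_real (g t / t)" and nonneg: "\<And>t. 0 \<le> g t"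
  shows "L = 0"
proof -
  have lim_right: "(Q \<longlongrightarrow> L) (at_right 0)" and lim_left: "(Q \<longlongrightarrow> L) (at_left 0)"
    using lim by (auto intro: tendsto_mono[OF at_le[OF subset_UNIV]])
  have right: "\<forall>\<^sub>F t in at_right 0. 0 < (t::real)" and left: "\<forall>\<^sub>F t in at_left 0. t < (0::real)"
    by (simp_all add: eventually_at_filter)
  have "\<forall>\<^sub>F t in at_right 0. 0 \<le> Re (Q t)"
    using right by eventually_elim (simp add: Q nonneg)
  then have "0 \<le> Re L" by (rule tendsto_lowerbound[OF tendsto_Re[OF lim_right]]) simp
  moreover have "\<forall>\<^sub>F t in at_left 0. Re (Q t) \<le> 0"
    using left by eventually_elim (simp add: Q nonneg divide_nonneg_neg)
  then have "Re L \<le> 0" by (rule tendsto_upperbound[OF tendsto_Re[OF lim_left]]) simp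
  moreover have "Im L = 0"
  proof -
    have "\<forall>\<^sub>F t in at_right 0. Im (Q t) = 0"
      using right by eventually_elim (simp add: Q)
    from Lim_transform_eventually[OF tendsto_Im[OF lim_right] this]
    show ?thesis by (simp add: tendsto_const_iff)
  qed
  ultimately show "L = 0" by (simp add: complex_eq_iff)
qed

lemma slope_zero_at_circle_minimum:
  fixes F u :: "complex \<Rightarrow> complex" and h :: "complex \<Rightarrow> real"
  assumes a: "cmod a = 1" and F: "isCont F a" and u: "isCont u a"
    and u_nz: "\<And>x. cmod x = 1 \<Longrightarrow> u x \<noteq> 0"
    and eq: "\<And>x. cmod x = 1 \<Longrightarrow> (x - a) * F x = u x * of_real (h x)"
    and nonneg: "\<And>x. cmod x = 1 \<Longrightarrow> 0 \<le> h x"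
  shows "F a = 0"
proof -
  let ?X = "circle_cayley a"
  \<comment> \<open>Chosen so that \<open>t * Q t = (?X t - a) * F (?X t) / u (?X t) = h (?X t)\<close>.\<close>
  define Q where "Q t = F (?X t) * (2 * \<i> * a) / ((1 - \<i> * of_real t) * u (?X t))" for t
  have "(Q \<longlongrightarrow> F a * (2 * \<i> * a) / ((1 - \<i> * of_real 0) * u a)) (at 0)"
    unfolding Q_def using u_nz[OF a]
    by (intro tendsto_intros isCont_tendsto_compose[OF F tendsto_circle_cayley]
        isCont_tendsto_compose[OF u tendsto_circle_cayley]) auto
  then have "(Q \<longlongrightarrow> F a * (2 * \<i> * a) / u a) (at 0)" by simp
  moreover have "Q t = of_real (h (?X t) / t)" if "t \<noteq> 0" for t
  proof -
    have "Q t * of_real t = (?X t - a) * F (?X t) / u (?X t)"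
      unfolding Q_def circle_cayley_minus_base using circle_cayley_denominator_nonzero[of t]
      by (simp add: field_simps)
    also have "\<dots> = of_real (h (?X t))"
      using eq u_nz norm_circle_cayley[OF a, of t] by (simp add: field_simps)
    finally show ?thesis using that by (simp add: field_simps)
  qed
  ultimately have "F a * (2 * \<i> * a) / u a = 0"
    by (rule limit_nonneg_div_eq_0) (use nonneg norm_circle_cayley[OF a] in auto)
  then show ?thesis using a u_nz[OF a] by auto
qed

lemma norm_le_if_zero_free_in_tridisk:
  fixes f g :: "complex \<Rightarrow> complex \<Rightarrow> complex"
  assumes zero_free: "\<And>z1 z2 w. cmod z1 < 1 \<Longrightarrow> cmod z2 < 1 \<Longrightarrow> cmod w < 1 \<Longrightarrow>
      f z1 z2 + w * g z1 z2 \<noteq> 0"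
    and f: "isCont (\<lambda>w. f (fst w) (snd w)) (x, y)"
    and g: "isCont (\<lambda>w. g (fst w) (snd w)) (x, y)"
    and x: "cmod x \<le> 1" and y: "cmod y \<le> 1"
  shows "cmod (g x y) \<le> cmod (f x y)"
proof (rule ccontr)
  assume "\<not> ?thesis"
  then have lt: "cmod (f x y) < cmod (g x y)" by simp
  then have g0: "g x y \<noteq> 0" by auto
  define fr where "fr r = f (of_real r * x) (of_real r * y)" for r :: real
  define gr where "gr r = g (of_real r * x) (of_real r * y)" for r :: real
  have ray: "((\<lambda>r. (complex_of_real r * x, complex_of_real r * y)) \<longlongrightarrow> (x, y)) (at_left 1)"
    by (rule tendsto_eq_intros refl | simp)+
  have lim_f: "(fr \<longlongrightarrow> f x y) (at_left 1)"
    using isCont_tendsto_compose[OF f ray] unfolding fr_def[abs_def] by simp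
  have lim_g: "(gr \<longlongrightarrow> g x y) (at_left 1)"
    using isCont_tendsto_compose[OF g ray] unfolding gr_def[abs_def] by simp
  \<comment> \<open>Along the ray, the root \<open>w = -f/g\<close> of \<open>f + w g\<close> eventually lies in the open disc.\<close>
  have "((\<lambda>r. - fr r / gr r) \<longlongrightarrow> - f x y / g x y) (at_left 1)"
    using lim_f lim_g g0 by (intro tendsto_intros)
  moreover have "cmod (- f x y / g x y) < 1" using lt g0 by (simp add: norm_divide divide_less_eq)
  ultimately have "\<forall>\<^sub>F r in at_left 1. cmod (- fr r / gr r) < 1"
    by (rule order_tendstoD(2)[OF tendsto_norm])
  moreover have "\<forall>\<^sub>F r in at_left 1. gr r \<noteq> 0"
    using tendsto_imp_eventually_ne[OF lim_g g0] .
  moreover have "\<forall>\<^sub>F r in at_left (1::real). r \<in> {0<..<1}"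
    by (rule eventually_at_left_real) simp
  ultimately have "\<forall>\<^sub>F r in at_left 1. cmod (- fr r / gr r) < 1 \<and> gr r \<noteq> 0 \<and> r \<in> {0<..<1}"
    by eventually_elim blast
  then obtain r where r: "cmod (- fr r / gr r) < 1" "gr r \<noteq> 0" "r \<in> {0<..<1}"
    using eventually_happens[of _ "at_left (1::real)"] by auto
  have "cmod (of_real r * x) < 1" "cmod (of_real r * y) < 1"
    using r(3) x y by (auto simp: norm_mult intro: mult_le_one le_less_trans[of _ r])
  from zero_free[OF this r(1)] r(2) show False by (simp add: fr_def gr_def)
qed

lemma cross_term_flat_at_boundary_zero:
  fixes p1 p2 q1 q2 :: "complex \<Rightarrow> complex \<Rightarrow> complex"
  assumes reflect1: "\<And>x y. cmod x = 1 \<Longrightarrow> cmod y = 1 \<Longrightarrow> q1 x y = x ^ m * y ^ n * cnj (p1 x y)"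
    and reflect2: "\<And>x y. cmod x = 1 \<Longrightarrow> cmod y = 1 \<Longrightarrow> q2 x y = x ^ m * y ^ n * cnj (p2 x y)"
    and le: "\<And>x y. cmod x = 1 \<Longrightarrow> cmod y = 1 \<Longrightarrow> cmod (p2 x y) \<le> cmod (p1 x y)"
    and diff: "caratheodory_diff2 a b (\<lambda>x y. q1 x y * p1 x y - q2 x y * p2 x y)"
    and a: "cmod a = 1" and b: "cmod b = 1" and eq: "cmod (p1 a b) = cmod (p2 a b)"
  obtains F G where "isCont (\<lambda>w. F (fst w) (snd w)) (a, b)" "isCont (\<lambda>w. G (fst w) (snd w)) (a, b)"
    and "F a b = 0" "G a b = 0"
    and "\<And>x y. q1 x y * p1 x y - q2 x y * p2 x y = (x - a) * F x y + (y - b) * G x y"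
proof -
  define D where "D x y = q1 x y * p1 x y - q2 x y * p2 x y" for x y
  define h where "h x y = (cmod (p1 x y))\<^sup>2 - (cmod (p2 x y))\<^sup>2" for x y
  have D_torus: "D x y = x ^ m * y ^ n * of_real (h x y)" if "cmod x = 1" "cmod y = 1" for x y
    unfolding D_def h_def reflect1[OF that] reflect2[OF that]
    by (simp add: complex_norm_square[symmetric] algebra_simps del: of_real_power)
  have h_nonneg: "0 \<le> h x y" if "cmod x = 1" "cmod y = 1" for x y
    unfolding h_def using le[OF that] by (simp add: power_mono)
  obtain F G where F: "isCont (\<lambda>w. F (fst w) (snd w)) (a, b)"
    and G: "isCont (\<lambda>w. G (fst w) (snd w)) (a, b)"
    and D_eq: "\<And>x y. D x y = D a b + (x - a) * F x y + (y - b) * G x y"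
    using diff unfolding caratheodory_diff2_def D_def[abs_def] by blast
  have D_ab: "D a b = 0" using D_torus[OF a b] eq by (simp add: h_def)
  have "F a b = 0"
  proof (rule slope_zero_at_circle_minimum
      [where F = "\<lambda>x. F x b" and a = a and u = "\<lambda>x. x ^ m * b ^ n" and h = "\<lambda>x. h x b"])
    show "isCont (\<lambda>x. F x b) a"
      using isCont_o2[where f = "\<lambda>x. (x, b)" and a = a and g = "\<lambda>w. F (fst w) (snd w)"] F by simp
    show "(x - a) * F x b = x ^ m * b ^ n * of_real (h x b)" if "cmod x = 1" for x
      using D_eq[of x b] D_ab D_torus[OF that b] by simp
  qed (use a b h_nonneg in \<open>auto intro: continuous_intros\<close>)
  moreover have "G a b = 0"
  proof (rule slope_zero_at_circle_minimum
      [where F = "\<lambda>y. G a y" and a = b and u = "\<lambda>y. a ^ m * y ^ n" and h = "\<lambda>y. h a y"])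
    show "isCont (\<lambda>y. G a y) b"
      using isCont_o2[where f = "\<lambda>y. (a, y)" and a = b and g = "\<lambda>w. G (fst w) (snd w)"] G by simp
    show "(y - b) * G a y = a ^ m * y ^ n * of_real (h a y)" if "cmod y = 1" for y
      using D_eq[of a y] D_ab D_torus[OF a that] by simp
  qed (use a b h_nonneg in \<open>auto intro: continuous_intros\<close>)
  moreover have "D x y = (x - a) * F x y + (y - b) * G x y" for x y
    using D_eq[of x y] D_ab by simp
  ultimately show ?thesis using that F G unfolding D_def by blast
qed

section \<open>Nontangential limits\<close>

lemma norm_affine_lower_bound_if_zero_free:
  fixes p1 p2 z :: complex
  assumes zero_free: "\<And>w. cmod w < 1 \<Longrightarrow> p1 + w * p2 \<noteq> 0"
  shows "cmod p2 * (1 - cmod z) \<le> cmod (p1 + z * p2)"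
proof (cases "p2 = 0")
  case False
  have "1 \<le> cmod (p1 / p2)"
  proof (rule ccontr)
    assume "\<not> 1 \<le> cmod (p1 / p2)"
    with zero_free[of "- p1 / p2"] False show False by simp
  qed
  then have "1 - cmod z \<le> cmod (z + p1 / p2)"
    using norm_diff_ineq[of "p1 / p2" z] by (simp add: add.commute)
  then have "cmod p2 * (1 - cmod z) \<le> cmod p2 * cmod (z + p1 / p2)"
    by (intro mult_left_mono) auto
  also have "\<dots> = cmod (p1 + z * p2)"
    using False by (simp add: norm_mult[symmetric] distrib_left ac_simps)
  finally show ?thesis .
qed simp

lemma nt_quotient_estimate:
  fixes p1 p2 q1 q2 F G K z1 z2 z3 a b :: complex and C :: real
  assumes zero_free: "\<And>w. cmod w < 1 \<Longrightarrow> p1 + w * p2 \<noteq> 0"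
    and z3: "cmod z3 < 1" and p2: "p2 \<noteq> 0"
    and cross: "q1 * p1 - q2 * p2 = (z1 - a) * F + (z2 - b) * G"
    and near_a: "cmod (z1 - a) \<le> C * (1 - cmod z3)" and near_b: "cmod (z2 - b) \<le> C * (1 - cmod z3)"
  shows "cmod ((z3 * q1 + q2) / (p1 + z3 * p2) - K)
           \<le> cmod (q1 - K * p2) / cmod p2 + C * (cmod F + cmod G) / (cmod p2)\<^sup>2"
proof -
  define P where "P = p1 + z3 * p2"
  have P_lower: "cmod p2 * (1 - cmod z3) \<le> cmod P"
    unfolding P_def by (rule norm_affine_lower_bound_if_zero_free[OF zero_free])
  have gap: "0 < 1 - cmod z3" using z3 by simp
  then have "0 < cmod p2 * (1 - cmod z3)" using p2 by simp
  with P_lower have P: "P \<noteq> 0" by auto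
  have split: "(z3 * q1 + q2) / P - K = (q1 - K * p2) / p2 - (q1 * p1 - q2 * p2) / (p2 * P)"
  proof -
    have num: "(q1 - K * p2) * P - (q1 * p1 - q2 * p2) = p2 * (z3 * q1 + q2 - K * P)"
      unfolding P_def by (simp add: algebra_simps)
    have "(q1 - K * p2) / p2 - (q1 * p1 - q2 * p2) / (p2 * P)
        = ((q1 - K * p2) * P - (q1 * p1 - q2 * p2)) / (p2 * P)"
      using p2 P by (simp add: field_simps)
    also have "\<dots> = (z3 * q1 + q2) / P - K"
      unfolding num using p2 P by (simp add: field_simps)
    finally show ?thesis by simp
  qed
  have "cmod (q1 * p1 - q2 * p2) \<le> cmod (z1 - a) * cmod F + cmod (z2 - b) * cmod G"
    unfolding cross by (metis norm_mult norm_triangle_ineq)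
  also have "\<dots> \<le> C * (1 - cmod z3) * (cmod F + cmod G)"
    using near_a near_b by (simp add: distrib_left mult_right_mono add_mono)
  finally have cross_bound: "cmod (q1 * p1 - q2 * p2) \<le> C * (1 - cmod z3) * (cmod F + cmod G)" .
  have "cmod ((q1 * p1 - q2 * p2) / (p2 * P))
      \<le> C * (1 - cmod z3) * (cmod F + cmod G) / (cmod p2 * (cmod p2 * (1 - cmod z3)))"
    unfolding norm_divide norm_mult
    using cross_bound P_lower gap p2 order_trans[OF norm_ge_zero cross_bound]
    by (intro frac_le mult_left_mono mult_pos_pos) auto
  also have "\<dots> = C * (cmod F + cmod G) / (cmod p2)\<^sup>2"
    using gap p2 by (simp add: field_simps power2_eq_square)
  finally have "cmod ((q1 * p1 - q2 * p2) / (p2 * P)) \<le> C * (cmod F + cmod G) / (cmod p2)\<^sup>2" .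
  then show ?thesis
    unfolding P_def[symmetric] split
    using norm_triangle_ineq4[of "(q1 - K * p2) / p2" "(q1 * p1 - q2 * p2) / (p2 * P)"]
    by (simp add: norm_divide)
qed

lemma nt_region_bounds:
  assumes "(z1, z2, z3) \<in> nt_region (a, b, s) C" and "0 \<le> C"
  shows "cmod z1 < 1" "cmod z2 < 1" "cmod z3 < 1"
    and "cmod (z1 - a) \<le> C * (1 - cmod z3)" "cmod (z2 - b) \<le> C * (1 - cmod z3)"
proof -
  from assms(1) show "cmod z1 < 1" "cmod z2 < 1" "cmod z3 < 1"
    unfolding nt_region_def tridisk_def by auto
  have "C * (1 - maxnorm3 (z1, z2, z3)) \<le> C * (1 - cmod z3)"
    using assms(2) unfolding maxnorm3_def by (intro mult_left_mono) auto
  with assms(1) show "cmod (z1 - a) \<le> C * (1 - cmod z3)" "cmod (z2 - b) \<le> C * (1 - cmod z3)"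
    unfolding nt_region_def maxnorm3_def by auto
qed

lemma nt_region_limit_nontrivial:
  fixes a b s :: complex
  assumes a: "cmod a = 1" and b: "cmod b = 1" and s: "cmod s = 1" and C: "1 \<le> C"
  shows "at (a, b, s) within nt_region (a, b, s) C \<noteq> bot"
  unfolding trivial_limit_within islimpt_approachable not_not
proof (intro allI impI)
  fix e :: real
  assume e: "0 < e"
  define r where "r = max (1/2) (1 - e / 6)"
  have r: "0 < r" "r < 1" "1 - r \<le> e / 6" using e unfolding r_def by (auto simp: max_def)
  define x where "x = (of_real r * a, of_real r * b, of_real r * s)"
  have unit_scaled: "cmod (of_real r * u) = r" and dist_scaled: "cmod (of_real r * u - u) = 1 - r"
    if "cmod u = 1" for u :: complex
  proof -
    show "cmod (of_real r * u) = r" using that r by (simp add: norm_mult)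
    have "cmod (of_real r * u - u) = cmod (of_real (r - 1) * u)" by (simp add: algebra_simps)
    also have "\<dots> = \<bar>r - 1\<bar>" using that by (simp only: norm_mult norm_of_real) simp
    finally show "cmod (of_real r * u - u) = 1 - r" using r by simp
  qed
  have "x \<in> nt_region (a, b, s) C"
    unfolding nt_region_def tridisk_def maxnorm3_def x_def
    using unit_scaled dist_scaled a b s r C by (simp add: mult_le_cancel_right1)
  moreover have "x \<noteq> (a, b, s)"
    using dist_scaled[OF a] r unfolding x_def by auto
  moreover have "dist x (a, b, s) < e"
  proof -
    have "dist x (a, b, s)
        \<le> cmod (of_real r * a - a) + (cmod (of_real r * b - b) + cmod (of_real r * s - s))"
      unfolding x_def dist_norm
      by (simp add: norm_Pair_le order_trans[OF norm_Pair_le add_left_mono])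
    also have "\<dots> = 3 * (1 - r)" using dist_scaled a b s by simp
    finally show ?thesis using r e by simp
  qed
  ultimately show "\<exists>x'\<in>nt_region (a, b, s) C. x' \<noteq> (a, b, s) \<and> dist x' (a, b, s) < e"
    by blast
qed

lemma has_nt_limit_unique:
  assumes "cmod a = 1" "cmod b = 1" "cmod s = 1"
    and "has_nt_limit f (a, b, s) L" and "has_nt_limit f (a, b, s) L'"
  shows "L = L'"
  using assms(4,5) unfolding has_nt_limit_def
  by (meson tendsto_unique nt_region_limit_nontrivial[OF assms(1-3) order_refl] zero_less_one)

lemma has_nt_limit_if_cross_term_flat:
  fixes p1 p2 q1 q2 F G :: "complex \<Rightarrow> complex \<Rightarrow> complex"
  assumes zero_free: "\<And>z1 z2 z3. cmod z1 < 1 \<Longrightarrow> cmod z2 < 1 \<Longrightarrow> cmod z3 < 1 \<Longrightarrow>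
      p1 z1 z2 + z3 * p2 z1 z2 \<noteq> 0"
    and p2: "isCont (\<lambda>w. p2 (fst w) (snd w)) (a, b)"
    and q1: "isCont (\<lambda>w. q1 (fst w) (snd w)) (a, b)"
    and F: "isCont (\<lambda>w. F (fst w) (snd w)) (a, b)" and G: "isCont (\<lambda>w. G (fst w) (snd w)) (a, b)"
    and F_ab: "F a b = 0" and G_ab: "G a b = 0"
    and cross: "\<And>x y. q1 x y * p1 x y - q2 x y * p2 x y = (x - a) * F x y + (y - b) * G x y"
    and p2_ab: "p2 a b \<noteq> 0" and K: "q1 a b = K * p2 a b"
  shows "has_nt_limit (\<lambda>(z1, z2, z3). (z3 * q1 z1 z2 + q2 z1 z2) / (p1 z1 z2 + z3 * p2 z1 z2))
           (a, b, s) K"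
  unfolding has_nt_limit_def
proof (intro allI impI)
  fix C :: real
  assume C: "0 < C"
  define \<phi> where "\<phi> = (\<lambda>(z1, z2, z3). (z3 * q1 z1 z2 + q2 z1 z2) / (p1 z1 z2 + z3 * p2 z1 z2))"
  define B where "B z1 z2 = cmod (q1 z1 z2 - K * p2 z1 z2) / cmod (p2 z1 z2)
      + C * (cmod (F z1 z2) + cmod (G z1 z2)) / (cmod (p2 z1 z2))\<^sup>2" for z1 z2
  define S where "S = nt_region (a, b, s) C"
  have pr: "((\<lambda>z. (fst z, fst (snd z))) \<longlongrightarrow> (a, b)) (at (a, b, s) within S)"
    by (rule tendsto_eq_intros refl | simp)+
  have "isCont (\<lambda>w. B (fst w) (snd w)) (a, b)"
    unfolding B_def using p2_ab by (intro continuous_intros p2 q1 F G) auto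
  from isCont_tendsto_compose[OF this pr]
  have B_lim: "((\<lambda>z. B (fst z) (fst (snd z))) \<longlongrightarrow> 0) (at (a, b, s) within S)"
    using K F_ab G_ab by (simp add: B_def)
  have "\<forall>\<^sub>F z in at (a, b, s) within S. z \<in> S"
    by (simp add: eventually_at_filter)
  moreover have "\<forall>\<^sub>F z in at (a, b, s) within S. p2 (fst z) (fst (snd z)) \<noteq> 0"
    using isCont_tendsto_compose[OF p2 pr] p2_ab by (simp add: tendsto_imp_eventually_ne)
  ultimately have "\<forall>\<^sub>F z in at (a, b, s) within S. norm (\<phi> z - K) \<le> B (fst z) (fst (snd z))"
  proof eventually_elim
    case (elim z)
    obtain z1 z2 z3 where z: "z = (z1, z2, z3)" by (cases z)
    note region = nt_region_bounds[OF elim(1)[unfolded S_def z] less_imp_le[OF C]]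
    from nt_quotient_estimate[OF zero_free[OF region(1,2)] region(3) _ cross region(4,5), of K]
      elim(2)
    show ?case unfolding z \<phi>_def B_def by simp
  qed
  then have "((\<lambda>z. \<phi> z - K) \<longlongrightarrow> 0) (at (a, b, s) within S)"
    by (rule Lim_null_comparison[OF _ B_lim])
  then show "((\<lambda>(z1, z2, z3). (z3 * q1 z1 z2 + q2 z1 z2) / (p1 z1 z2 + z3 * p2 z1 z2)) \<longlongrightarrow> K)
      (at (a, b, s) within nt_region (a, b, s) C)"
    unfolding S_def \<phi>_def by (simp add: Lim_null[symmetric])
qed

lemma has_nt_limit_quotient_at_boundary_zero:
  fixes p1 p2 q1 q2 :: "complex \<Rightarrow> complex \<Rightarrow> complex"
  assumes zero_free: "\<And>z1 z2 z3. cmod z1 < 1 \<Longrightarrow> cmod z2 < 1 \<Longrightarrow> cmod z3 < 1 \<Longrightarrow>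
      p1 z1 z2 + z3 * p2 z1 z2 \<noteq> 0"
    and reflect1: "\<And>x y. cmod x = 1 \<Longrightarrow> cmod y = 1 \<Longrightarrow> q1 x y = x ^ m * y ^ n * cnj (p1 x y)"
    and reflect2: "\<And>x y. cmod x = 1 \<Longrightarrow> cmod y = 1 \<Longrightarrow> q2 x y = x ^ m * y ^ n * cnj (p2 x y)"
    and diff_p1: "\<And>x y. caratheodory_diff2 x y p1" and diff_p2: "\<And>x y. caratheodory_diff2 x y p2"
    and diff_q1: "\<And>x y. caratheodory_diff2 x y q1" and diff_q2: "\<And>x y. caratheodory_diff2 x y q2"
    and a: "cmod a = 1" and b: "cmod b = 1"
    and p2_ab: "p2 a b \<noteq> 0" and eq: "cmod (p1 a b) = cmod (p2 a b)"
  shows "has_nt_limit (\<lambda>(z1, z2, z3). (z3 * q1 z1 z2 + q2 z1 z2) / (p1 z1 z2 + z3 * p2 z1 z2))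
           (a, b, s) (q2 a b / p1 a b)"
proof -
  note cont = caratheodory_diff2_isCont[OF diff_p1] caratheodory_diff2_isCont[OF diff_p2]
    caratheodory_diff2_isCont[OF diff_q1]
  have le: "cmod (p2 x y) \<le> cmod (p1 x y)" if "cmod x = 1" "cmod y = 1" for x y
    by (rule norm_le_if_zero_free_in_tridisk[where f = p1 and g = p2])
       (use zero_free cont that in auto)
  obtain F G where F: "isCont (\<lambda>w. F (fst w) (snd w)) (a, b)"
    and G: "isCont (\<lambda>w. G (fst w) (snd w)) (a, b)"
    and F_ab: "F a b = 0" and G_ab: "G a b = 0"
    and cross: "\<And>x y. q1 x y * p1 x y - q2 x y * p2 x y = (x - a) * F x y + (y - b) * G x y"
    using cross_term_flat_at_boundary_zero[OF reflect1 reflect2 le _ a b eq]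
      caratheodory_diff2_diff caratheodory_diff2_mult diff_p1 diff_p2 diff_q1 diff_q2 by blast
  have K: "q1 a b = q2 a b / p1 a b * p2 a b"
  proof -
    have "p1 a b \<noteq> 0" using eq p2_ab by auto
    moreover have "cnj (p2 a b) * p2 a b = cnj (p1 a b) * p1 a b"
      using eq by (metis complex_norm_square mult.commute)
    ultimately show ?thesis using reflect1[OF a b] reflect2[OF a b] by (simp add: field_simps)
  qed
  show ?thesis
    by (rule has_nt_limit_if_cross_term_flat[OF zero_free cont(2,3) F G F_ab G_ab cross p2_ab K])
qed

lemma has_nt_limit_peval3_degree_one:
  assumes zero_free: "\<forall>z\<in>tridisk. peval3 m n 1 c z \<noteq> 0"
    and a: "cmod a = 1" and b: "cmod b = 1"
    and p2_ab: "peval2 m n (\<lambda>i j. c i j 1) a b \<noteq> 0"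
    and eq: "cmod (peval2 m n (\<lambda>i j. c i j 0) a b) = cmod (peval2 m n (\<lambda>i j. c i j 1) a b)"
  shows "has_nt_limit (\<lambda>z. peval3 m n 1 (refl3 m n 1 c) z / peval3 m n 1 c z) (a, b, s)
           (peval2 m n (\<lambda>i j. cnj (c (m - i) (n - j) 1)) a b / peval2 m n (\<lambda>i j. c i j 0) a b)"
proof -
  have quotient: "(\<lambda>z. peval3 m n 1 (refl3 m n 1 c) z / peval3 m n 1 c z) =
      (\<lambda>(z1, z2, z3). (z3 * peval2 m n (\<lambda>i j. cnj (c (m - i) (n - j) 0)) z1 z2
                           + peval2 m n (\<lambda>i j. cnj (c (m - i) (n - j) 1)) z1 z2)
                      / (peval2 m n (\<lambda>i j. c i j 0) z1 z2 + z3 * peval2 m n (\<lambda>i j. c i j 1) z1 z2))"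
    by (intro ext)
       (clarsimp simp only: peval3_refl3_degree_one prod.case, simp only: peval3_degree_one)
  have "peval2 m n (\<lambda>i j. c i j 0) z1 z2 + z3 * peval2 m n (\<lambda>i j. c i j 1) z1 z2 \<noteq> 0"
    if "cmod z1 < 1" "cmod z2 < 1" "cmod z3 < 1" for z1 z2 z3
    using zero_free that peval3_degree_one[of m n c z1 z2 z3] unfolding tridisk_def by auto
  then show ?thesis
    unfolding quotient
    by (rule has_nt_limit_quotient_at_boundary_zero
        [OF _ peval2_reflect_on_torus peval2_reflect_on_torus caratheodory_diff2_peval2
          caratheodory_diff2_peval2 caratheodory_diff2_peval2 caratheodory_diff2_peval2 a b p2_ab eq])
qed

theorem lemma4p7:
  fixes c :: "nat \<Rightarrow> nat \<Rightarrow> nat \<Rightarrow> complex" and m n :: nat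
    and \<tau>1 \<tau>2 :: complex
  defines "p \<equiv> peval3 m n 1 c"
    and "pt \<equiv> peval3 m n 1 (refl3 m n 1 c)"
    and "p1 \<equiv> peval2 m n (\<lambda>i j. c i j 0)"
    and "pt2 \<equiv> peval2 m n (\<lambda>i j. cnj (c (m - i) (n - j) 1))"
  assumes deg: "exact_degree3 m n 1 c"
    and zero_free: "\<forall>z\<in>tridisk. p z \<noteq> 0"
    and coprime: "poly3_no_common_factor p pt"
    and irred: "poly3_irreducible p"
    and t1: "cmod \<tau>1 = 1" and t2: "cmod \<tau>2 = 1"
  shows "((\<exists>!t3. cmod t3 = 1 \<and> p (\<tau>1, \<tau>2, t3) = 0) \<longrightarrow>
            (\<forall>lam t3'. cmod lam = 1 \<and> cmod t3' = 1 \<longrightarrow>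
               (has_nt_limit (\<lambda>z. pt z / p z) (\<tau>1, \<tau>2, t3') lam
                  \<longleftrightarrow> lam * p1 \<tau>1 \<tau>2 - pt2 \<tau>1 \<tau>2 = 0)))
       \<and> ((\<forall>t3. cmod t3 = 1 \<longrightarrow> p (\<tau>1, \<tau>2, t3) = 0) \<longrightarrow>
            (\<forall>lam. cmod lam = 1 \<longrightarrow> lam * p1 \<tau>1 \<tau>2 - pt2 \<tau>1 \<tau>2 = 0))"
proof -
  define p2 where "p2 = peval2 m n (\<lambda>i j. c i j 1)"
  have p_split: "p (z1, z2, z3) = p1 z1 z2 + z3 * p2 z1 z2" for z1 z2 z3
    unfolding p_def p1_def p2_def by (rule peval3_degree_one)
  show ?thesis
  proof (intro conjI impI allI)
    assume "\<exists>!t3. cmod t3 = 1 \<and> p (\<tau>1, \<tau>2, t3) = 0"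
    then have "\<exists>!t3. cmod t3 = 1 \<and> p1 \<tau>1 \<tau>2 + t3 * p2 \<tau>1 \<tau>2 = 0" by (simp add: p_split)
    note root = affine_unique_root_on_circle[OF this]
    then have p1_nz: "p1 \<tau>1 \<tau>2 \<noteq> 0" by auto
    have lim: "has_nt_limit (\<lambda>z. pt z / p z) (\<tau>1, \<tau>2, s) (pt2 \<tau>1 \<tau>2 / p1 \<tau>1 \<tau>2)" for s
      unfolding p_def pt_def p1_def pt2_def
      by (rule has_nt_limit_peval3_degree_one
          [OF zero_free[unfolded p_def] t1 t2 root[unfolded p1_def p2_def]])
    fix lam t3'
    assume "cmod lam = 1 \<and> cmod t3' = 1"
    then have "has_nt_limit (\<lambda>z. pt z / p z) (\<tau>1, \<tau>2, t3') lam \<longleftrightarrow> lam = pt2 \<tau>1 \<tau>2 / p1 \<tau>1 \<tau>2"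
      using has_nt_limit_unique[OF t1 t2 _ _ lim] lim by blast
    also have "\<dots> \<longleftrightarrow> lam * p1 \<tau>1 \<tau>2 - pt2 \<tau>1 \<tau>2 = 0"
      using p1_nz by (auto simp: field_simps)
    finally show "has_nt_limit (\<lambda>z. pt z / p z) (\<tau>1, \<tau>2, t3') lam
        \<longleftrightarrow> lam * p1 \<tau>1 \<tau>2 - pt2 \<tau>1 \<tau>2 = 0" .
  next
    fix lam
    assume "\<forall>t3. cmod t3 = 1 \<longrightarrow> p (\<tau>1, \<tau>2, t3) = 0"
    then have "\<forall>t3. cmod t3 = 1 \<longrightarrow> p1 \<tau>1 \<tau>2 + t3 * p2 \<tau>1 \<tau>2 = 0" by (simp add: p_split)
    note vanish = affine_vanishing_on_circle[OF this]
    have "pt2 \<tau>1 \<tau>2 = \<tau>1 ^ m * \<tau>2 ^ n * cnj (p2 \<tau>1 \<tau>2)"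
      unfolding pt2_def p2_def by (rule peval2_reflect_on_torus[OF t1 t2])
    with vanish show "lam * p1 \<tau>1 \<tau>2 - pt2 \<tau>1 \<tau>2 = 0" by simp
  qed
qed

end
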